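(* Let $D\subset\mathbb{C}$ be an open disk centered at $0$, $f_1,\dots,f_p:D\to\mathbb{C}$ analytic, $A_1,\dots,A_p\in\mathbb{C}^{n\times n}$ with $M(\lambda)=\sum_{m=1}^p f_m(\lambda)A_m$ satisfying $M(\lambda)^T=M(\lambda)$ on $D$, and $M_j:=M^{(j)}(0)$. Let $\mathbf{C}=[c_{i,j}]$ be the infinite matrix determined by $c_{i,1}=1/(i+1)$ ($i\ge1$) and $c_{i-1,j}=\frac{j}{i}c_{i,j-1}$ ($i,j>1$); let $\mathbf{S}$ be the infinite block matrix with $S_{1,1}=I$, $S_{1,j}=S_{j,1}=0$ ($j\ge2$), $S_{i,j}=c_{i-1,j-1}M_{i+j-2}$ ($i,j\ge2$); let $\mathbf{A}=\operatorname{diag}(-M_0,I,I,\dots)$; and let $\mathbf{B}$ have first block row $(M_1,\frac12M_2,\frac13M_3,\dots)$, blocks $\frac1jI$ in positions $(j+1,j)$, and zeros elsewhere. For a positive integer $N$, $[\mathbf{X}]_N$ denotes the leading $Nn\times Nn$ submatrix formed by the first $N\times N$ blocks. Let $k$ be a positive integer with $k+1\le N$, assume $[\mathbf{S}]_{2N}$ is invertible (and $[\mathbf{S}\mathbf{A}]_N$ is invertible, as implicit in the statement). Let $q_k\in\mathbb{C}^{Nn}$ be a vector, viewed as $N$ blocks in $\mathbb{C}^n$, such that only its first $k$ blocks are nonzero, these being the columns of $Q_k=[\tilde q_1,\dots,\tilde q_k]\in\mathbb{C}^{n\times k}$. Then only the first $k+1$ blocks of $w=[\mathbf{S}\mathbf{A}]_N^{-1}[\mathbf{S}\mathbf{B}]_Nq_k$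 are nonzero, and these are the columns of $W=[w_1,\dots,w_{k+1}]$ given by $$W=w_1e_1^T+Q_kD,\qquad w_1=-M_0^{-1}\sum_{j=1}^k\frac{M_j}{j}\tilde q_j,$$ where $D\in\mathbb{R}^{k\times(k+1)}$ has entries $d_{j,j+1}=1/j$ ($j=1,\dots,k$) and all other entries zero, and $e_1\in\mathbb{R}^{k+1}$ is the first unit vector.
   Context: Matrices and vectors are complex; transpose $^T$ is the plain (non-conjugate) transpose. *)

theory Defs
  imports "HOL-Analysis.Complex_Analysis_Basics" "HOL-Analysis.Infinite_Sum"
    "Jordan_Normal_Form.Gauss_Jordan_Elimination"
begin

definition Mfun :: "nat \<Rightarrow> nat \<Rightarrow> (nat \<Rightarrow> complex \<Rightarrow> complex) \<Rightarrow> (nat \<Rightarrow> complex mat)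
    \<Rightarrow> complex \<Rightarrow> complex mat" where
  "Mfun n p f A z = Matrix.mat n n (\<lambda>(a,b). \<Sum>m\<in>{1..p}. f m z * A m $$ (a,b))"

definition Mder :: "nat \<Rightarrow> nat \<Rightarrow> (nat \<Rightarrow> complex \<Rightarrow> complex) \<Rightarrow> (nat \<Rightarrow> complex mat)
    \<Rightarrow> nat \<Rightarrow> complex mat" where
  "Mder n p f A j = Matrix.mat n n (\<lambda>(a,b). (deriv ^^ j) (\<lambda>z. Mfun n p f A z $$ (a,b)) 0)"

text \<open>Coefficients c_{i,j} (1-based): c_{i,1} = 1/(i+1), c_{i,j+1} = (j+1)/(i+1) c_{i+1,j},
  which is the relation c_{i-1,j} = j/i c_{i,j-1}.  Index 0 values are never used.\<close>
fun cc :: "nat \<Rightarrow> nat \<Rightarrow> complex" where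
  "cc i 0 = 0"
| "cc i (Suc 0) = 1 / of_nat (i + 1)"
| "cc i (Suc (Suc j)) = of_nat (j + 2) / of_nat (i + 1) * cc (i + 1) (Suc j)"

text \<open>An infinite block matrix is given by its n x n blocks F i j (i, j \<ge> 1);
  it is represented as an infinite scalar matrix with 0-based scalar indices.\<close>
definition blockmat :: "nat \<Rightarrow> (nat \<Rightarrow> nat \<Rightarrow> complex mat) \<Rightarrow> nat \<Rightarrow> nat \<Rightarrow> complex" where
  "blockmat n F a b = F (a div n + 1) (b div n + 1) $$ (a mod n, b mod n)"

definition imat_mult :: "(nat \<Rightarrow> nat \<Rightarrow> complex) \<Rightarrow> (nat \<Rightarrow> nat \<Rightarrow> complex) \<Rightarrow> nat \<Rightarrow> nat \<Rightarrow> complex" where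
  "imat_mult X Y a b = infsum (\<lambda>c. X a c * Y c b) UNIV"

definition lead :: "nat \<Rightarrow> nat \<Rightarrow> (nat \<Rightarrow> nat \<Rightarrow> complex) \<Rightarrow> complex mat" where
  "lead n N X = Matrix.mat (N * n) (N * n) (\<lambda>(a,b). X a b)"

definition Sblk :: "nat \<Rightarrow> (nat \<Rightarrow> complex mat) \<Rightarrow> nat \<Rightarrow> nat \<Rightarrow> complex mat" where
  "Sblk n Md i j = (if i = 1 \<and> j = 1 then 1\<^sub>m n
      else if i = 1 \<or> j = 1 then 0\<^sub>m n n
      else cc (i - 1) (j - 1) \<cdot>\<^sub>m Md (i + j - 2))"

definition Ablk :: "nat \<Rightarrow> (nat \<Rightarrow> complex mat) \<Rightarrow> nat \<Rightarrow> nat \<Rightarrow> complex mat" where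
  "Ablk n Md i j = (if i \<noteq> j then 0\<^sub>m n n else if i = 1 then - Md 0 else 1\<^sub>m n)"

definition Bblk :: "nat \<Rightarrow> (nat \<Rightarrow> complex mat) \<Rightarrow> nat \<Rightarrow> nat \<Rightarrow> complex mat" where
  "Bblk n Md i j = (if i = 1 then (1 / of_nat j) \<cdot>\<^sub>m Md j
      else if i = j + 1 then (1 / of_nat j) \<cdot>\<^sub>m 1\<^sub>m n
      else 0\<^sub>m n n)"

definition minv :: "complex mat \<Rightarrow> complex mat" where
  "minv X = the (mat_inverse X)"

end

theory Submission
  imports Defs "Jordan_Normal_Form.Determinant"
begin

text \<open>The first block row and column of S are those of the identity. Hence the first block
  row of [SA]_N is (-M_0, 0, ..., 0) and that of [SB]_N is (M_1, M_2/2, M_3/3, ...), while in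
  every other block row i we have ([SA]_N w)_i = sum_{j >= 2} S_{i,j} w_j and
  ([SB]_N q)_i = sum_{j >= 1} S_{i,j+1} q_j / j. So [SA]_N w = [SB]_N q_k holds as soon as
  -M_0 w_1 = sum_j M_j q_j / j and w_{j+1} = q_j / j, which is W = w_1 e_1^T + Q_k D.
  M_0 is invertible because the invertible matrix [SA]_N has first block row (-M_0, 0, ..., 0).\<close>

lemma infsum_UNIV_eq_sum:
  fixes g :: "'a \<Rightarrow> 'b :: {comm_monoid_add, t2_space}"
  assumes "finite F" and "\<And>c. c \<notin> F \<Longrightarrow> g c = 0"
  shows "infsum g UNIV = sum g F"
proof -
  have "infsum g UNIV = infsum g F"
    by (rule infsum_cong_neutral) (use assms in auto)
  with assms(1) show ?thesis by simp
qed

lemma sum_lessThan_mult_blocks: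
  fixes g :: "nat \<Rightarrow> 'a :: comm_monoid_add"
  shows "(\<Sum>b<N * n. g b) = (\<Sum>j<N. \<Sum>t<n. g (j * n + t))"
proof -
  have "(\<Sum>b<N * n. g b) = (\<Sum>j<N. \<Sum>b\<in>{j * n..<j * n + n}. g b)"
    by (rule sum.nat_group[symmetric])
  also have "\<dots> = (\<Sum>j<N. \<Sum>t<n. g (j * n + t))"
    using sum.shift_bounds_nat_ivl[of g 0 "_ * n" n]
    by (simp add: add.commute atLeast0LessThan)
  finally show ?thesis .
qed

lemma block_index_less: "(j :: nat) < N \<Longrightarrow> t < n \<Longrightarrow> j * n + t < N * n"
  using mult_le_mono1[of "Suc j" N n] by simp

lemma minv_inverse:
  assumes X: "X \<in> carrier_mat m m" and Y: "Y \<in> carrier_mat m m" and XY: "X * Y = 1\<^sub>m m"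
  shows "minv X * X = 1\<^sub>m m" and "X * minv X = 1\<^sub>m m" and "minv X \<in> carrier_mat m m"
proof -
  have "Y * X = 1\<^sub>m m" using mat_mult_left_right_inverse[OF X Y XY] .
  with X Y XY have "X \<in> Units (ring_mat TYPE(complex) m (undefined :: unit))"
    unfolding Units_def ring_mat_def by auto
  then obtain Z where Z: "mat_inverse X = Some Z"
    using mat_inverse(1)[OF X, of "()"] by (cases "mat_inverse X") auto
  then show "minv X * X = 1\<^sub>m m" and "X * minv X = 1\<^sub>m m" and "minv X \<in> carrier_mat m m"
    using mat_inverse(2)[OF X Z] by (auto simp: minv_def)
qed

lemma invertible_mat_right_inverse:
  assumes "invertible_mat X" and "X \<in> carrier_mat m m"
  obtains Y where "Y \<in> carrier_mat m m" and "X * Y = 1\<^sub>m m"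
proof -
  from assms(1) obtain Y where "inverts_mat X Y" and "inverts_mat Y X"
    unfolding invertible_mat_def by auto
  with assms(2) have "X * Y = 1\<^sub>m m" and "Y * X = 1\<^sub>m (dim_row Y)"
    unfolding inverts_mat_def by auto
  moreover from this assms(2) have "Y \<in> carrier_mat m m"
    by (metis carrier_matD carrier_matI index_mult_mat(2,3) index_one_mat(2,3))
  ultimately show ?thesis using that by blast
qed

lemma minv_mult_vec_cancel:
  assumes "invertible_mat X" and X: "X \<in> carrier_mat m m" and v: "v \<in> carrier_vec m"
  shows "minv X *\<^sub>v (X *\<^sub>v v) = v"
proof -
  obtain Y where "Y \<in> carrier_mat m m" and "X * Y = 1\<^sub>m m"
    using invertible_mat_right_inverse[OF assms(1) X] .
  then have "minv X * X = 1\<^sub>m m" and "minv X \<in> carrier_mat m m"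
    using minv_inverse[OF X] by auto
  with X v show ?thesis
    by (metis assoc_mult_mat_vec one_mult_mat_vec)
qed

lemma leading_block_right_inverse:
  fixes X Y M :: "'a :: comm_ring_1 mat"
  assumes X: "X \<in> carrier_mat m m" and Y: "Y \<in> carrier_mat m m" and XY: "X * Y = 1\<^sub>m m"
    and "n \<le> m" and M: "M \<in> carrier_mat n n"
    and first_rows: "\<And>i j. i < n \<Longrightarrow> j < m \<Longrightarrow> X $$ (i, j) = (if j < n then M $$ (i, j) else 0)"
  shows "M * Matrix.mat n n (\<lambda>(i, j). Y $$ (i, j)) = 1\<^sub>m n"
proof (rule eq_matI)
  fix i j assume "i < dim_row (1\<^sub>m n :: 'a mat)" "j < dim_col (1\<^sub>m n :: 'a mat)"
  then have ij: "i < n" "j < n" by auto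
  have "(M * Matrix.mat n n (\<lambda>(i, j). Y $$ (i, j))) $$ (i, j) = (\<Sum>c<n. M $$ (i, c) * Y $$ (c, j))"
    using ij M by (auto simp: scalar_prod_def atLeast0LessThan intro!: sum.cong)
  also have "\<dots> = (\<Sum>c<m. X $$ (i, c) * Y $$ (c, j))"
    using \<open>n \<le> m\<close> ij by (intro sum.mono_neutral_cong_left) (auto simp: first_rows)
  also have "\<dots> = (X * Y) $$ (i, j)"
    using X Y ij \<open>n \<le> m\<close> by (simp add: scalar_prod_def atLeast0LessThan)
  finally show "(M * Matrix.mat n n (\<lambda>(i, j). Y $$ (i, j))) $$ (i, j) = 1\<^sub>m n $$ (i, j)"
    using XY ij \<open>n \<le> m\<close> by simp
qed (use M in auto)

definition identity_first_block :: "nat \<Rightarrow> (nat \<Rightarrow> nat \<Rightarrow> 'a :: zero_neq_one) \<Rightarrow> bool" where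
  "identity_first_block n S \<longleftrightarrow> (\<forall>a c. a < n \<or> c < n \<longrightarrow> S a c = (if a = c then 1 else 0))"

lemma identity_first_blockD:
  "identity_first_block n S \<Longrightarrow> a < n \<or> c < n \<Longrightarrow> S a c = (if a = c then 1 else 0)"
  unfolding identity_first_block_def by blast

definition stack_cols :: "nat \<Rightarrow> nat \<Rightarrow> 'a :: zero mat \<Rightarrow> 'a vec" where
  "stack_cols n N C = Matrix.vec (N * n)
     (\<lambda>a. if a div n < dim_col C then C $$ (a mod n, a div n) else 0)"

lemma index_lead_mult_vec:
  assumes "a < N * n" and "dim_vec v = N * n"
  shows "(lead n N X *\<^sub>v v) $ a = (\<Sum>b<N * n. X a b * v $ b)"
  using assms by (simp add: lead_def scalar_prod_def atLeast0LessThan)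

lemma carrier_stack_cols [simp]: "stack_cols n N C \<in> carrier_vec (N * n)"
  by (simp add: stack_cols_def)

lemma carrier_lead [simp]: "lead n N X \<in> carrier_mat (N * n) (N * n)"
  by (simp add: lead_def)

lemma index_stack_cols:
  "a < N * n \<Longrightarrow> stack_cols n N C $ a = (if a div n < dim_col C then C $$ (a mod n, a div n) else 0)"
  by (simp add: stack_cols_def)

lemma identity_first_block_Sblk: "identity_first_block n (blockmat n (Sblk n Md))"
  by (auto simp: identity_first_block_def blockmat_def Sblk_def div_eq_0_iff)

lemma blockmat_Ablk:
  assumes "n > 0" and "Md 0 \<in> carrier_mat n n"
  shows "blockmat n (Ablk n Md) c b =
    (if b < n then (if c < n then - Md 0 $$ (c, b) else 0) else if c = b then 1 else 0)"
proof -
  have "c div n = b div n \<and> c mod n = b mod n \<longleftrightarrow> c = b"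
    by (metis div_mult_mod_eq)
  with assms show ?thesis
    by (auto simp: blockmat_def Ablk_def div_eq_0_iff)
qed

lemma blockmat_Bblk:
  assumes "n > 0" and "\<And>j. Md j \<in> carrier_mat n n"
  shows "blockmat n (Bblk n Md) c b =
    (if c < n then Md (b div n + 1) $$ (c, b mod n) / of_nat (b div n + 1)
     else if c = b + n then 1 / of_nat (b div n + 1) else 0)"
proof -
  have "c div n = (b + n) div n \<and> c mod n = (b + n) mod n \<longleftrightarrow> c = b + n"
    by (metis div_mult_mod_eq)
  then have "c div n = b div n + 1 \<and> c mod n = b mod n \<longleftrightarrow> c = b + n"
    using assms(1) by simp
  with assms show ?thesis
    by (auto simp: blockmat_def Bblk_def div_eq_0_iff carrier_matD[OF assms(2)])
qed

lemma imat_mult_Ablk: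
  assumes "n > 0" and "Md 0 \<in> carrier_mat n n"
  shows "imat_mult X (blockmat n (Ablk n Md)) a b =
    (if b < n then - (\<Sum>c<n. X a c * Md 0 $$ (c, b)) else X a b)"
proof -
  have "imat_mult X (blockmat n (Ablk n Md)) a b =
      (\<Sum>c\<in>(if b < n then {..<n} else {b}). X a c * blockmat n (Ablk n Md) c b)"
    unfolding imat_mult_def by (rule infsum_UNIV_eq_sum) (auto simp: blockmat_Ablk[where Md = Md, OF assms])
  then show ?thesis
    by (simp add: blockmat_Ablk[where Md = Md, OF assms] sum_negf)
qed

lemma imat_mult_Bblk:
  assumes "n > 0" and "\<And>j. Md j \<in> carrier_mat n n"
  shows "imat_mult X (blockmat n (Bblk n Md)) a b =
    ((\<Sum>c<n. X a c * Md (b div n + 1) $$ (c, b mod n)) + X a (b + n)) / of_nat (b div n + 1)"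
proof -
  have "imat_mult X (blockmat n (Bblk n Md)) a b =
      (\<Sum>c\<in>insert (b + n) {..<n}. X a c * blockmat n (Bblk n Md) c b)"
    unfolding imat_mult_def by (rule infsum_UNIV_eq_sum) (auto simp: blockmat_Bblk[where Md = Md, OF assms])
  then show ?thesis
    by (simp add: blockmat_Bblk[where Md = Md, OF assms] sum_divide_distrib add_divide_distrib)
qed

lemma imat_mult_Ablk_first_rows:
  assumes S: "identity_first_block n S"
    and M0: "Md 0 \<in> carrier_mat n n" and "a < n"
  shows "imat_mult S (blockmat n (Ablk n Md)) a b = (if b < n then - Md 0 $$ (a, b) else 0)"
proof -
  have n: "n > 0" using \<open>a < n\<close> by simp
  show ?thesis
    using \<open>a < n\<close> identity_first_blockD[OF S]
    by (simp add: imat_mult_Ablk[where Md = Md, OF n M0] if_distrib[of "\<lambda>x. x * _"] cong: if_cong)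
qed

lemma lead_SA_mult_stack_cols_first_rows:
  assumes S: "identity_first_block n S"
    and M0: "Md 0 \<in> carrier_mat n n" and W: "W \<in> carrier_mat n m" "m > 0"
    and "a < n" and "a < N * n"
  shows "(lead n N (imat_mult S (blockmat n (Ablk n Md))) *\<^sub>v stack_cols n N W) $ a
    = - (Md 0 *\<^sub>v col W 0) $ a"
proof -
  note SA = imat_mult_Ablk_first_rows[where S = S and Md = Md, OF S M0 \<open>a < n\<close>]
  have "n \<le> N * n" using \<open>a < N * n\<close> by (cases N) auto
  have W0: "stack_cols n N W $ b = W $$ (b, 0)" if "b < n" for b
    using that less_le_trans[OF that \<open>n \<le> N * n\<close>] W by (simp add: stack_cols_def)
  have "(lead n N (imat_mult S (blockmat n (Ablk n Md))) *\<^sub>v stack_cols n N W) $ a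
      = (\<Sum>b<N * n. imat_mult S (blockmat n (Ablk n Md)) a b * stack_cols n N W $ b)"
    using \<open>a < N * n\<close> by (intro index_lead_mult_vec) (auto simp: stack_cols_def)
  also have "\<dots> = (\<Sum>b<n. - Md 0 $$ (a, b) * W $$ (b, 0))"
    using \<open>n \<le> N * n\<close> by (intro sum.mono_neutral_cong_right) (auto simp: SA W0)
  also have "\<dots> = - (Md 0 *\<^sub>v col W 0) $ a"
    using \<open>a < n\<close> M0 W by (simp add: scalar_prod_def atLeast0LessThan sum_negf)
  finally show ?thesis .
qed

lemma lead_SB_mult_stack_cols_first_rows:
  assumes S: "identity_first_block n S"
    and Md: "\<And>j. Md j \<in> carrier_mat n n" and Q: "Q \<in> carrier_mat n k"
    and "k \<le> N" and "a < n" and "a < N * n"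
  shows "(lead n N (imat_mult S (blockmat n (Bblk n Md))) *\<^sub>v stack_cols n N Q) $ a
    = (\<Sum>j\<in>{1..k}. (Md j *\<^sub>v col Q (j - 1)) $ a / of_nat j)"
proof -
  have n: "n > 0" using \<open>a < n\<close> by simp
  have SB: "imat_mult S (blockmat n (Bblk n Md)) a b
      = Md (b div n + 1) $$ (a, b mod n) / of_nat (b div n + 1)" for b
    using \<open>a < n\<close> identity_first_blockD[OF S]
    by (simp add: imat_mult_Bblk[OF n Md] if_distrib[of "\<lambda>x. x * _"] cong: if_cong)
  from \<open>a < N * n\<close> have "(lead n N (imat_mult S (blockmat n (Bblk n Md))) *\<^sub>v stack_cols n N Q) $ a
      = (\<Sum>b<N * n. imat_mult S (blockmat n (Bblk n Md)) a b * stack_cols n N Q $ b)"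
    by (intro index_lead_mult_vec) (auto simp: stack_cols_def)
  also have "\<dots> = (\<Sum>j<N. \<Sum>t<n. Md (j + 1) $$ (a, t) / of_nat (j + 1) * (if j < k then Q $$ (t, j) else 0))"
    using Q by (auto simp: sum_lessThan_mult_blocks SB index_stack_cols block_index_less intro!: sum.cong)
  also have "\<dots> = (\<Sum>j<k. \<Sum>t<n. Md (j + 1) $$ (a, t) * Q $$ (t, j) / of_nat (j + 1))"
    using \<open>k \<le> N\<close> by (intro sum.mono_neutral_cong_right) auto
  also have "\<dots> = (\<Sum>j\<in>{1..k}. (Md j *\<^sub>v col Q (j - 1)) $ a / of_nat j)"
    using \<open>a < n\<close> Q
    by (auto simp: sum.atLeast1_atMost_eq scalar_prod_def atLeast0LessThan sum_divide_distrib
        carrier_matD[OF Md] intro!: sum.cong)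
  finally show ?thesis .
qed

lemma stack_cols_shift:
  fixes Q W :: "'a :: field mat"
  assumes Q: "Q \<in> carrier_mat n k" and W: "W \<in> carrier_mat n (k + 1)"
    and W_shift: "\<And>i j. i < n \<Longrightarrow> j < k \<Longrightarrow> W $$ (i, j + 1) = Q $$ (i, j) / of_nat (j + 1)"
    and "b + n < N * n"
  shows "stack_cols n N W $ (b + n) = stack_cols n N Q $ b / of_nat (b div n + 1)"
proof -
  have "n > 0" using \<open>b + n < N * n\<close> by (cases "n = 0") auto
  then have "(b + n) div n = b div n + 1" and "(b + n) mod n = b mod n" by simp_all
  with Q W W_shift \<open>n > 0\<close> \<open>b + n < N * n\<close> show ?thesis
    by (auto simp: stack_cols_def)
qed

lemma lead_SA_SB_mult_stack_cols_lower_rows: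
  assumes S: "identity_first_block n S"
    and Md: "\<And>j. Md j \<in> carrier_mat n n"
    and Q: "Q \<in> carrier_mat n k" and W: "W \<in> carrier_mat n (k + 1)"
    and W_shift: "\<And>i j. i < n \<Longrightarrow> j < k \<Longrightarrow> W $$ (i, j + 1) = Q $$ (i, j) / of_nat (j + 1)"
    and "k + 1 \<le> N" and "n \<le> a" and "a < N * n"
  shows "(lead n N (imat_mult S (blockmat n (Ablk n Md))) *\<^sub>v stack_cols n N W) $ a
    = (lead n N (imat_mult S (blockmat n (Bblk n Md))) *\<^sub>v stack_cols n N Q) $ a"
proof -
  have n: "n > 0" using \<open>a < N * n\<close> by (cases "n = 0") auto
  have S0: "S a c = 0" if "c < n" for c
    using that \<open>n \<le> a\<close> identity_first_blockD[OF S] by auto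
  have SA: "imat_mult S (blockmat n (Ablk n Md)) a b = (if b < n then 0 else S a b)" for b
    by (simp add: imat_mult_Ablk[where Md = Md, OF n Md] S0)
  have SB: "imat_mult S (blockmat n (Bblk n Md)) a b = S a (b + n) / of_nat (b div n + 1)" for b
    by (simp add: imat_mult_Bblk[where Md = Md, OF n Md] S0)
  have "k * n + n \<le> N * n"
    using mult_le_mono1[OF \<open>k + 1 \<le> N\<close>, of n] by simp
  then have top: "N * n - n + n = N * n" by simp
  have Q_tail: "stack_cols n N Q $ b = 0" if "N * n - n \<le> b" "b < N * n" for b
    using that n Q \<open>k * n + n \<le> N * n\<close> by (simp add: stack_cols_def div_less_iff_less_mult)
  have "(lead n N (imat_mult S (blockmat n (Ablk n Md))) *\<^sub>v stack_cols n N W) $ a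
      = (\<Sum>b<N * n. imat_mult S (blockmat n (Ablk n Md)) a b * stack_cols n N W $ b)"
    using \<open>a < N * n\<close> by (intro index_lead_mult_vec) (auto simp: stack_cols_def)
  also have "\<dots> = (\<Sum>b\<in>{n..<N * n}. S a b * stack_cols n N W $ b)"
    by (intro sum.mono_neutral_cong_right) (auto simp: SA)
  also have "\<dots> = (\<Sum>b<N * n - n. S a (b + n) * stack_cols n N W $ (b + n))"
    using sum.shift_bounds_nat_ivl[of "\<lambda>b. S a b * stack_cols n N W $ b" 0 n "N * n - n"]
    by (simp add: top atLeast0LessThan)
  also have "\<dots> = (\<Sum>b<N * n - n. S a (b + n) * stack_cols n N Q $ b / of_nat (b div n + 1))"
    using top by (intro sum.cong refl) (simp add: stack_cols_shift[OF Q W W_shift])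
  also have "\<dots> = (\<Sum>b<N * n. S a (b + n) * stack_cols n N Q $ b / of_nat (b div n + 1))"
    by (intro sum.mono_neutral_left) (auto simp: Q_tail)
  also have "\<dots> = (\<Sum>b<N * n. imat_mult S (blockmat n (Bblk n Md)) a b * stack_cols n N Q $ b)"
    by (simp add: SB)
  also have "\<dots> = (lead n N (imat_mult S (blockmat n (Bblk n Md))) *\<^sub>v stack_cols n N Q) $ a"
    using \<open>a < N * n\<close> by (intro index_lead_mult_vec[symmetric]) (auto simp: stack_cols_def)
  finally show ?thesis .
qed

lemma lead_SA_mult_stack_cols_eq:
  assumes S: "identity_first_block n S"
    and Md: "\<And>j. Md j \<in> carrier_mat n n"
    and Q: "Q \<in> carrier_mat n k" and W: "W \<in> carrier_mat n (k + 1)"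
    and W_shift: "\<And>i j. i < n \<Longrightarrow> j < k \<Longrightarrow> W $$ (i, j + 1) = Q $$ (i, j) / of_nat (j + 1)"
    and first_col: "- (Md 0 *\<^sub>v col W 0)
      = Matrix.vec n (\<lambda>a. \<Sum>j\<in>{1..k}. (Md j *\<^sub>v col Q (j - 1)) $ a / of_nat j)"
    and "k + 1 \<le> N"
  shows "lead n N (imat_mult S (blockmat n (Ablk n Md))) *\<^sub>v stack_cols n N W
    = lead n N (imat_mult S (blockmat n (Bblk n Md))) *\<^sub>v stack_cols n N Q"
    (is "?SA *\<^sub>v ?w = ?SB *\<^sub>v ?q")
proof (rule eq_vecI)
  fix a assume "a < dim_vec (?SB *\<^sub>v ?q)"
  then have "a < N * n" by (simp add: lead_def)
  show "(?SA *\<^sub>v ?w) $ a = (?SB *\<^sub>v ?q) $ a"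
  proof (cases "a < n")
    case True
    have "(?SA *\<^sub>v ?w) $ a = - (Md 0 *\<^sub>v col W 0) $ a"
      using lead_SA_mult_stack_cols_first_rows[OF S Md W _ True \<open>a < N * n\<close>] by simp
    also have "\<dots> = (\<Sum>j\<in>{1..k}. (Md j *\<^sub>v col Q (j - 1)) $ a / of_nat j)"
      using arg_cong[OF first_col, of "\<lambda>x. x $ a"] True by (simp add: carrier_matD[OF Md])
    also have "\<dots> = (?SB *\<^sub>v ?q) $ a"
      using lead_SB_mult_stack_cols_first_rows[OF S Md Q _ True \<open>a < N * n\<close>] \<open>k + 1 \<le> N\<close>
      by simp
    finally show ?thesis .
  next
    case False
    then show ?thesis
      using lead_SA_SB_mult_stack_cols_lower_rows[OF S Md Q W W_shift \<open>k + 1 \<le> N\<close>] \<open>a < N * n\<close>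
      by simp
  qed
qed (simp add: lead_def)

lemma invertible_lead_SA_imp_Md0_inverse:
  assumes S: "identity_first_block n S"
    and M0: "Md 0 \<in> carrier_mat n n" and "N > 0"
    and inv: "invertible_mat (lead n N (imat_mult S (blockmat n (Ablk n Md))))"
  shows "Md 0 * minv (Md 0) = 1\<^sub>m n" and "minv (Md 0) \<in> carrier_mat n n"
proof -
  let ?X = "lead n N (imat_mult S (blockmat n (Ablk n Md)))"
  have X: "?X \<in> carrier_mat (N * n) (N * n)" by (simp add: lead_def)
  obtain Y where Y: "Y \<in> carrier_mat (N * n) (N * n)" and XY: "?X * Y = 1\<^sub>m (N * n)"
    using invertible_mat_right_inverse[OF inv X] .
  define Z where "Z = Matrix.mat n n (\<lambda>(i, j). Y $$ (i, j))"
  have "n \<le> N * n" using \<open>N > 0\<close> by simp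
  moreover have "?X $$ (i, j) = (if j < n then (- Md 0) $$ (i, j) else 0)"
    if "i < n" and "j < N * n" for i j
  proof -
    have "i < N * n" using that \<open>n \<le> N * n\<close> by linarith
    with that M0 show ?thesis
      by (simp add: lead_def imat_mult_Ablk_first_rows[where S = S and Md = Md, OF S M0])
  qed
  ultimately have "- Md 0 * Z = 1\<^sub>m n"
    unfolding Z_def using M0 by (intro leading_block_right_inverse[OF X Y XY]) auto
  then have "Md 0 * (- Z) = 1\<^sub>m n" using M0 by (simp add: Z_def)
  moreover have "- Z \<in> carrier_mat n n" by (simp add: Z_def)
  ultimately show "Md 0 * minv (Md 0) = 1\<^sub>m n" and "minv (Md 0) \<in> carrier_mat n n"
    using minv_inverse[OF M0, of "- Z"] by simp_all
qed

lemma index_outer_unit_plus_mult_shift: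
  fixes w :: "'a :: field vec"
  assumes w: "w \<in> carrier_vec n" and Q: "Q \<in> carrier_mat n k" and "i < n" and "j < k + 1"
  shows "(mat_of_cols n [w] * mat_of_rows (k + 1) [unit_vec (k + 1) 0]
      + Q * Matrix.mat k (k + 1) (\<lambda>(i, l). if l = i + 1 then 1 / of_nat (i + 1) else 0)) $$ (i, j)
    = (if j = 0 then w $ i else Q $$ (i, j - 1) / of_nat j)"
proof -
  have "(Q * Matrix.mat k (k + 1) (\<lambda>(i, l). if l = i + 1 then 1 / of_nat (i + 1) else 0)) $$ (i, j)
      = (\<Sum>t<k. Q $$ (i, t) * (if j = t + 1 then 1 / of_nat (t + 1) else 0))"
    using \<open>i < n\<close> \<open>j < k + 1\<close> Q by (simp add: scalar_prod_def atLeast0LessThan)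
  also have "\<dots> = (if j = 0 then 0 else Q $$ (i, j - 1) / of_nat j)"
    using \<open>j < k + 1\<close> by (cases j) (auto simp: if_distrib cong: if_cong)
  finally show ?thesis
    using \<open>i < n\<close> \<open>j < k + 1\<close> w Q
    by (simp add: scalar_prod_def mat_of_cols_def mat_of_rows_def)
qed

lemma lead_SA_mult_stack_cols_solution:
  assumes S: "identity_first_block n S" and Md: "\<And>j. Md j \<in> carrier_mat n n"
    and Q: "Q \<in> carrier_mat n k" and "k + 1 \<le> N"
    and M0: "Md 0 * minv (Md 0) = 1\<^sub>m n" "minv (Md 0) \<in> carrier_mat n n"
  defines "v \<equiv> Matrix.vec n (\<lambda>a. \<Sum>j\<in>{1..k}. (Md j *\<^sub>v col Q (j - 1)) $ a / of_nat j)"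
  defines "w1 \<equiv> - (minv (Md 0) *\<^sub>v v)"
  defines "W \<equiv> mat_of_cols n [w1] * mat_of_rows (k + 1) [unit_vec (k + 1) 0]
    + Q * Matrix.mat k (k + 1) (\<lambda>(i, l). if l = i + 1 then 1 / of_nat (i + 1) else 0)"
  shows "lead n N (imat_mult S (blockmat n (Ablk n Md))) *\<^sub>v stack_cols n N W
    = lead n N (imat_mult S (blockmat n (Bblk n Md))) *\<^sub>v stack_cols n N Q"
proof -
  have v: "v \<in> carrier_vec n" by (simp add: v_def)
  then have w1: "w1 \<in> carrier_vec n" using M0 by (simp add: w1_def)
  have W: "W \<in> carrier_mat n (k + 1)" using Q by (simp add: W_def)
  have W_entries: "W $$ (i, j) = (if j = 0 then w1 $ i else Q $$ (i, j - 1) / of_nat j)"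
    if "i < n" "j < k + 1" for i j
    unfolding W_def using index_outer_unit_plus_mult_shift[OF w1 Q that] .
  have "Md 0 *\<^sub>v (minv (Md 0) *\<^sub>v v) = v"
    using M0 Md[of 0] v by (metis assoc_mult_mat_vec one_mult_mat_vec)
  moreover have "col W 0 = w1" using W w1 by (auto simp: W_entries)
  moreover have "Md 0 *\<^sub>v w1 = - (Md 0 *\<^sub>v (minv (Md 0) *\<^sub>v v))"
    using M0(2) Md[of 0] v by (intro eq_vecI) (auto simp: w1_def)
  ultimately have "- (Md 0 *\<^sub>v col W 0) = v" by simp
  then show ?thesis
    unfolding v_def using \<open>k + 1 \<le> N\<close>
    by (intro lead_SA_mult_stack_cols_eq[OF S Md Q W]) (auto simp: W_entries)
qed

theorem theorem3:
  fixes n p N k :: nat and r :: real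
    and f :: "nat \<Rightarrow> complex \<Rightarrow> complex" and A :: "nat \<Rightarrow> complex mat"
    and Q :: "complex mat"
  defines "Md \<equiv> Mder n p f A"
  defines "S \<equiv> blockmat n (Sblk n Md)"
    and "AA \<equiv> blockmat n (Ablk n Md)"
    and "B \<equiv> blockmat n (Bblk n Md)"
  assumes r: "r > 0"
    and hol: "\<forall>m\<in>{1..p}. f m holomorphic_on ball 0 r"
    and Acar: "\<forall>m\<in>{1..p}. A m \<in> carrier_mat n n"
    and sym: "\<forall>z\<in>ball 0 r. transpose_mat (Mfun n p f A z) = Mfun n p f A z"
    and k: "k \<ge> 1" "k + 1 \<le> N"
    and S2N: "invertible_mat (lead n (2 * N) S)"
    and SAN: "invertible_mat (lead n N (imat_mult S AA))"
    and Q: "Q \<in> carrier_mat n k"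
  shows
    "let q = Matrix.vec (N * n) (\<lambda>a. if a div n < k then Q $$ (a mod n, a div n) else 0);
         w = minv (lead n N (imat_mult S AA)) *\<^sub>v (lead n N (imat_mult S B) *\<^sub>v q);
         w1 = - (minv (Md 0) *\<^sub>v
                  Matrix.vec n (\<lambda>a. \<Sum>j\<in>{1..k}. (Md j *\<^sub>v col Q (j - 1)) $ a / of_nat j));
         e1 = unit_vec (k + 1) 0;
         D = Matrix.mat k (k + 1) (\<lambda>(i, l). if l = i + 1 then 1 / of_nat (i + 1) else 0);
         W = mat_of_cols n [w1] * mat_of_rows (k + 1) [e1] + Q * D
     in w = Matrix.vec (N * n) (\<lambda>a. if a div n < k + 1 then W $$ (a mod n, a div n) else 0)"
proof -
  have Md: "\<And>j. Md j \<in> carrier_mat n n" by (simp add: Md_def Mder_def)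
  have S: "identity_first_block n S" unfolding S_def by (rule identity_first_block_Sblk)
  have M0: "Md 0 * minv (Md 0) = 1\<^sub>m n" "minv (Md 0) \<in> carrier_mat n n"
    using invertible_lead_SA_imp_Md0_inverse[OF S Md _ SAN[unfolded AA_def]] k by auto
  define W where "W = mat_of_cols n [- (minv (Md 0) *\<^sub>v
      Matrix.vec n (\<lambda>a. \<Sum>j\<in>{1..k}. (Md j *\<^sub>v col Q (j - 1)) $ a / of_nat j))]
    * mat_of_rows (k + 1) [unit_vec (k + 1) 0]
    + Q * Matrix.mat k (k + 1) (\<lambda>(i, l). if l = i + 1 then 1 / of_nat (i + 1) else 0)"
  have "dim_col W = k + 1" by (simp add: W_def)
  have "lead n N (imat_mult S AA) *\<^sub>v stack_cols n N W
      = lead n N (imat_mult S B) *\<^sub>v stack_cols n N Q"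
    unfolding AA_def B_def W_def
    by (rule lead_SA_mult_stack_cols_solution[where Md = Md, OF S Md Q k(2) M0])
  then have "minv (lead n N (imat_mult S AA)) *\<^sub>v (lead n N (imat_mult S B) *\<^sub>v stack_cols n N Q)
      = stack_cols n N W"
    by (metis minv_mult_vec_cancel[OF SAN carrier_lead carrier_stack_cols])
  moreover have "stack_cols n N Q
      = Matrix.vec (N * n) (\<lambda>a. if a div n < k then Q $$ (a mod n, a div n) else 0)"
    using Q by (simp add: stack_cols_def)
  moreover have "stack_cols n N W
      = Matrix.vec (N * n) (\<lambda>a. if a div n < k + 1 then W $$ (a mod n, a div n) else 0)"
    using \<open>dim_col W = k + 1\<close> by (simp add: stack_cols_def)
  ultimately show ?thesis
    unfolding Let_def W_def by simp
qed

end
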